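(* Assume $L_1\subseteq\bigcup_{\alpha\in\Sigma^\kappa}\Sigma^*\alpha\Sigma^*\bar\alpha$ and $L_2\subseteq\bigcup_{\alpha\in\Sigma^\kappa}\alpha\Sigma^*\bar\alpha\Sigma^*$. Let $M=\mathcal{I}\times\mathcal{F}$ where $\mathcal{I},\mathcal{F}$ are the initial and final states of $\mathcal{A}$; for $\mu=(I,F)\in M$ with $F=((d_1,d_2),e_1,e_2,\kappa)$ let $R_\mu$ be the set of labels of paths in $\mathcal{A}$ from $I$ to $F$ and $B_\mu=B(d_1,d_2,e_1,e_2)$. Let $\sigma=\max_{\mu\in M}\lambda_{B_\mu}$, $\rho=\max_{\mu\in M}\lambda_{R_\mu}$ and $\lambda=\max\{\lambda_{L_1},\lambda_{L_2}\}$. Then $\lambda=\max\{\sigma,\rho\}$.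
   Context: $\Sigma$ is a finite alphabet with at least two letters with an involution $a\mapsto\bar a$ ($\bar{\bar a}=a$), extended to words by $\overline{a_1\cdots a_m}=\bar a_m\cdots\bar a_1$ and to languages elementwise. $\kappa$ is a fixed positive integer. $L_1,L_2$ are regular; $\mathcal{A}_1=(Q_1,\Sigma,E_1,\{q_{01}\},F_1)$ is a complete DFA accepting $L_1$, $\mathcal{A}_2=(Q_2,\Sigma,E_2,\{q_{02}\},F_2)$ a complete DFA accepting $\overline{L_2}$; $p\cdot w$ is the state reached from $p$ on $w$. Growth indicator: $\lambda_L=\inf\{\lambda\ge0:\exists c>0\ \forall m: |L\cap\Sigma^m|\le c\lambda^m\}$. Construction of $\mathcal{A}$: $Q_{12}=\{(q_{01}\cdot w,q_{02}\cdot w):w\in\Sigma^*\}$ with $(p_1,p_2)\cdot w=(p_1\cdot w,p_2\cdot w)$. For $(p_1,p_2,q_1,q_2)\in Q_1\times Q_2\times Q_1\times Q_2$ let $B(p_1,p_2,q_1,q_2)=\{w:p_1\cdot w=q_1,\ p_2\cdot\bar w=q_2\}$; the quadruple is a basic bridge if this set is nonempty. States of $\mathcal{A}$ are all $((p_1,p_2),q_1,q_2,\ell)$ with $(p_1,p_2)\in Q_{12}$, $q_i\in Q_i$, $\ell\in\{0,\dots,\kappa\}$, $(p_1,p_2,q_1,q_2)$ a basic bridge. For $a\in\Sigma$, $P\in Q_{12}$, $q_i\in Q_i$, there is an $a$-arc from $(P,q_1\cdot\bar a,q_2\cdot\bar a,\ell)$ to $(P\cdot a,q_1,q_2,\ell')$,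 provided both are states, exactly when: $\ell=\ell'=0$ and $q_1\cdot\bar a\notin F_1$, $q_2\cdot\bar a\notin F_2$; or $\ell=0,\ell'=1$ and ($q_1\cdot\bar a\in F_1$ or $q_2\cdot\bar a\in F_2$); or $1\le\ell<\kappa$ and $\ell'=\ell+1$. Initial states: $((q_{01},q_{02}),q_1',q_2',0)$; final states: those with $\ell=\kappa$. $\mathcal{A}$ is trimmed: states not reachable from an initial state, or from which no final state is reachable, are removed. *)

theory Defs
  imports Complex_Main
begin

definition wbar :: "('a \<Rightarrow> 'a) \<Rightarrow> 'a list \<Rightarrow> 'a list" where
  "wbar bar w = rev (map bar w)"

definition growth :: "'a list set \<Rightarrow> real" where
  "growth L = Inf {l::real. l \<ge> 0 \<and>
      (\<exists>c>0. \<forall>m::nat. real (card {w\<in>L. length w = m}) \<le> c * l ^ m)}"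

definition dfa_lang :: "('q \<Rightarrow> 'a \<Rightarrow> 'q) \<Rightarrow> 'q \<Rightarrow> 'q set \<Rightarrow> 'a list set" where
  "dfa_lang d q0 F = {w. foldl d q0 w \<in> F}"

definition Bset :: "('a \<Rightarrow> 'a) \<Rightarrow> ('q1 \<Rightarrow> 'a \<Rightarrow> 'q1) \<Rightarrow> ('q2 \<Rightarrow> 'a \<Rightarrow> 'q2)
    \<Rightarrow> 'q1 \<Rightarrow> 'q2 \<Rightarrow> 'q1 \<Rightarrow> 'q2 \<Rightarrow> 'a list set" where
  "Bset bar d1 d2 p1 p2 q1 q2 = {w. foldl d1 p1 w = q1 \<and> foldl d2 p2 (wbar bar w) = q2}"

definition Q12 :: "('q1 \<Rightarrow> 'a \<Rightarrow> 'q1) \<Rightarrow> 'q1 \<Rightarrow> ('q2 \<Rightarrow> 'a \<Rightarrow> 'q2) \<Rightarrow> 'q2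
    \<Rightarrow> ('q1 \<times> 'q2) set" where
  "Q12 d1 q01 d2 q02 = {(foldl d1 q01 w, foldl d2 q02 w) | w. True}"

type_synonym ('q1, 'q2) astate = "('q1 \<times> 'q2) \<times> 'q1 \<times> 'q2 \<times> nat"

definition aut_states :: "('a \<Rightarrow> 'a) \<Rightarrow> nat \<Rightarrow> ('q1 \<Rightarrow> 'a \<Rightarrow> 'q1) \<Rightarrow> 'q1
    \<Rightarrow> ('q2 \<Rightarrow> 'a \<Rightarrow> 'q2) \<Rightarrow> 'q2 \<Rightarrow> ('q1, 'q2) astate set" where
  "aut_states bar \<kappa> d1 q01 d2 q02 =
     {(P, q1, q2, l). P \<in> Q12 d1 q01 d2 q02 \<and> l \<le> \<kappa> \<and>
        Bset bar d1 d2 (fst P) (snd P) q1 q2 \<noteq> {}}"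

definition aut_arc :: "('a \<Rightarrow> 'a) \<Rightarrow> nat \<Rightarrow> ('q1 \<Rightarrow> 'a \<Rightarrow> 'q1) \<Rightarrow> 'q1 \<Rightarrow> 'q1 set
    \<Rightarrow> ('q2 \<Rightarrow> 'a \<Rightarrow> 'q2) \<Rightarrow> 'q2 \<Rightarrow> 'q2 set
    \<Rightarrow> ('q1, 'q2) astate \<Rightarrow> 'a \<Rightarrow> ('q1, 'q2) astate \<Rightarrow> bool" where
  "aut_arc bar \<kappa> d1 q01 F1 d2 q02 F2 s a t \<longleftrightarrow>
     s \<in> aut_states bar \<kappa> d1 q01 d2 q02 \<and> t \<in> aut_states bar \<kappa> d1 q01 d2 q02 \<and>
     (\<exists>P q1 q2 l l'.
        s = (P, d1 q1 (bar a), d2 q2 (bar a), l) \<and>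
        t = ((d1 (fst P) a, d2 (snd P) a), q1, q2, l') \<and>
        ((l = 0 \<and> l' = 0 \<and> d1 q1 (bar a) \<notin> F1 \<and> d2 q2 (bar a) \<notin> F2) \<or>
         (l = 0 \<and> l' = 1 \<and> (d1 q1 (bar a) \<in> F1 \<or> d2 q2 (bar a) \<in> F2)) \<or>
         (1 \<le> l \<and> l < \<kappa> \<and> l' = l + 1)))"

definition aut_init :: "('a \<Rightarrow> 'a) \<Rightarrow> nat \<Rightarrow> ('q1 \<Rightarrow> 'a \<Rightarrow> 'q1) \<Rightarrow> 'q1
    \<Rightarrow> ('q2 \<Rightarrow> 'a \<Rightarrow> 'q2) \<Rightarrow> 'q2 \<Rightarrow> ('q1, 'q2) astate set" where
  "aut_init bar \<kappa> d1 q01 d2 q02 =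
     {s \<in> aut_states bar \<kappa> d1 q01 d2 q02. \<exists>q1 q2. s = ((q01, q02), q1, q2, 0)}"

definition aut_fin :: "('a \<Rightarrow> 'a) \<Rightarrow> nat \<Rightarrow> ('q1 \<Rightarrow> 'a \<Rightarrow> 'q1) \<Rightarrow> 'q1
    \<Rightarrow> ('q2 \<Rightarrow> 'a \<Rightarrow> 'q2) \<Rightarrow> 'q2 \<Rightarrow> ('q1, 'q2) astate set" where
  "aut_fin bar \<kappa> d1 q01 d2 q02 =
     {s \<in> aut_states bar \<kappa> d1 q01 d2 q02. snd (snd (snd s)) = \<kappa>}"

inductive lpath :: "'s set \<Rightarrow> ('s \<Rightarrow> 'a \<Rightarrow> 's \<Rightarrow> bool) \<Rightarrow> 's \<Rightarrow> 'a list \<Rightarrow> 's \<Rightarrow> bool"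
  for V E where
  lpath_nil: "s \<in> V \<Longrightarrow> lpath V E s [] s"
| lpath_cons: "E s a s' \<Longrightarrow> lpath V E s' w t \<Longrightarrow> lpath V E s (a # w) t"

definition aut_useful :: "('a \<Rightarrow> 'a) \<Rightarrow> nat \<Rightarrow> ('q1 \<Rightarrow> 'a \<Rightarrow> 'q1) \<Rightarrow> 'q1 \<Rightarrow> 'q1 set
    \<Rightarrow> ('q2 \<Rightarrow> 'a \<Rightarrow> 'q2) \<Rightarrow> 'q2 \<Rightarrow> 'q2 set \<Rightarrow> ('q1, 'q2) astate set" where
  "aut_useful bar \<kappa> d1 q01 F1 d2 q02 F2 =
     {s \<in> aut_states bar \<kappa> d1 q01 d2 q02.
        (\<exists>i \<in> aut_init bar \<kappa> d1 q01 d2 q02. \<exists>w.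
            lpath (aut_states bar \<kappa> d1 q01 d2 q02) (aut_arc bar \<kappa> d1 q01 F1 d2 q02 F2) i w s) \<and>
        (\<exists>f \<in> aut_fin bar \<kappa> d1 q01 d2 q02. \<exists>w.
            lpath (aut_states bar \<kappa> d1 q01 d2 q02) (aut_arc bar \<kappa> d1 q01 F1 d2 q02 F2) s w f)}"

definition taut_arc :: "('a \<Rightarrow> 'a) \<Rightarrow> nat \<Rightarrow> ('q1 \<Rightarrow> 'a \<Rightarrow> 'q1) \<Rightarrow> 'q1 \<Rightarrow> 'q1 set
    \<Rightarrow> ('q2 \<Rightarrow> 'a \<Rightarrow> 'q2) \<Rightarrow> 'q2 \<Rightarrow> 'q2 set
    \<Rightarrow> ('q1, 'q2) astate \<Rightarrow> 'a \<Rightarrow> ('q1, 'q2) astate \<Rightarrow> bool" where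
  "taut_arc bar \<kappa> d1 q01 F1 d2 q02 F2 s a t \<longleftrightarrow>
     aut_arc bar \<kappa> d1 q01 F1 d2 q02 F2 s a t \<and>
     s \<in> aut_useful bar \<kappa> d1 q01 F1 d2 q02 F2 \<and> t \<in> aut_useful bar \<kappa> d1 q01 F1 d2 q02 F2"

definition aut_M :: "('a \<Rightarrow> 'a) \<Rightarrow> nat \<Rightarrow> ('q1 \<Rightarrow> 'a \<Rightarrow> 'q1) \<Rightarrow> 'q1 \<Rightarrow> 'q1 set
    \<Rightarrow> ('q2 \<Rightarrow> 'a \<Rightarrow> 'q2) \<Rightarrow> 'q2 \<Rightarrow> 'q2 set
    \<Rightarrow> (('q1, 'q2) astate \<times> ('q1, 'q2) astate) set" where
  "aut_M bar \<kappa> d1 q01 F1 d2 q02 F2 =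
     (aut_init bar \<kappa> d1 q01 d2 q02 \<inter> aut_useful bar \<kappa> d1 q01 F1 d2 q02 F2) \<times>
     (aut_fin bar \<kappa> d1 q01 d2 q02 \<inter> aut_useful bar \<kappa> d1 q01 F1 d2 q02 F2)"

definition R_mu :: "('a \<Rightarrow> 'a) \<Rightarrow> nat \<Rightarrow> ('q1 \<Rightarrow> 'a \<Rightarrow> 'q1) \<Rightarrow> 'q1 \<Rightarrow> 'q1 set
    \<Rightarrow> ('q2 \<Rightarrow> 'a \<Rightarrow> 'q2) \<Rightarrow> 'q2 \<Rightarrow> 'q2 set
    \<Rightarrow> ('q1, 'q2) astate \<times> ('q1, 'q2) astate \<Rightarrow> 'a list set" where
  "R_mu bar \<kappa> d1 q01 F1 d2 q02 F2 \<mu> =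
     {w. lpath (aut_useful bar \<kappa> d1 q01 F1 d2 q02 F2) (taut_arc bar \<kappa> d1 q01 F1 d2 q02 F2)
            (fst \<mu>) w (snd \<mu>)}"

definition B_mu :: "('a \<Rightarrow> 'a) \<Rightarrow> ('q1 \<Rightarrow> 'a \<Rightarrow> 'q1) \<Rightarrow> ('q2 \<Rightarrow> 'a \<Rightarrow> 'q2)
    \<Rightarrow> ('q1, 'q2) astate \<times> ('q1, 'q2) astate \<Rightarrow> 'a list set" where
  "B_mu bar d1 d2 \<mu> = (case snd \<mu> of ((p1, p2), e1, e2, _) \<Rightarrow> Bset bar d1 d2 p1 p2 e1 e2)"

text \<open>Maxima over M; convention: the maximum over an empty M is 0 (all growth indicators are >= 0).\<close>
definition sigma_max :: "('a \<Rightarrow> 'a) \<Rightarrow> nat \<Rightarrow> ('q1 \<Rightarrow> 'a \<Rightarrow> 'q1) \<Rightarrow> 'q1 \<Rightarrow> 'q1 set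
    \<Rightarrow> ('q2 \<Rightarrow> 'a \<Rightarrow> 'q2) \<Rightarrow> 'q2 \<Rightarrow> 'q2 set \<Rightarrow> real" where
  "sigma_max bar \<kappa> d1 q01 F1 d2 q02 F2 =
     Max (insert 0 ((\<lambda>\<mu>. growth (B_mu bar d1 d2 \<mu>)) ` aut_M bar \<kappa> d1 q01 F1 d2 q02 F2))"

definition rho_max :: "('a \<Rightarrow> 'a) \<Rightarrow> nat \<Rightarrow> ('q1 \<Rightarrow> 'a \<Rightarrow> 'q1) \<Rightarrow> 'q1 \<Rightarrow> 'q1 set
    \<Rightarrow> ('q2 \<Rightarrow> 'a \<Rightarrow> 'q2) \<Rightarrow> 'q2 \<Rightarrow> 'q2 set \<Rightarrow> real" where
  "rho_max bar \<kappa> d1 q01 F1 d2 q02 F2 =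
     Max (insert 0 ((\<lambda>\<mu>. growth (R_mu bar \<kappa> d1 q01 F1 d2 q02 F2 \<mu>)) ` aut_M bar \<kappa> d1 q01 F1 d2 q02 F2))"

end

theory Submission
  imports Defs
begin

text \<open>
  For \<open>\<sigma>, \<rho> \<le> \<lambda>\<close>: a word of \<open>B\<^sub>\<mu>\<close> or \<open>R\<^sub>\<mu>\<close> is padded, injectively and by a fixed number of
  letters, into \<open>L\<^sub>1\<close> or \<open>L\<^sub>2\<close>: the path of \<open>\<A>\<close> into the final state of \<open>\<mu>\<close> certifies a factor
  \<open>\<alpha>\<close> of length \<open>\<kappa>\<close> whose mirror image leads the bridge to acceptance.
  For \<open>\<lambda> \<le> max \<sigma> \<rho>\<close>: deleting the last \<open>\<kappa>\<close> letters of a word of \<open>L\<^sub>1\<close> (or of the mirror image of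
  \<open>L\<^sub>2\<close>) leaves a word \<open>x'y\<close> with \<open>x' \<in> R\<^sub>\<mu>\<close> and \<open>y\<close> a prefix of a word of \<open>B\<^sub>\<mu>\<close> (or of its
  mirror image); the witness is the run of \<open>\<A>\<close> whose level counter starts at the first position
  where the mirrored tail reaches a final state. Prefixes of \<open>B\<^sub>\<mu>\<close> grow no faster than \<open>B\<^sub>\<mu>\<close>,
  because completions can be chosen of bounded length, and neither concatenation nor finite
  unions increase the growth indicator.
\<close>

definition count_len :: "'a list set \<Rightarrow> nat \<Rightarrow> nat" where
  "count_len L m = card {w \<in> L. length w = m}"

definition exp_bounded :: "'a list set \<Rightarrow> real \<Rightarrow> bool" where
  "exp_bounded L l \<longleftrightarrow> (\<exists>c>0. \<forall>m. real (count_len L m) \<le> c * l ^ m)"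

lemma growth_eq_Inf: "growth L = Inf {l. 0 \<le> l \<and> exp_bounded L l}"
  by (simp add: growth_def exp_bounded_def count_len_def)

lemma finite_words_length: "finite {w :: 'a::finite list. length w = m}"
  using finite_lists_length_eq[of "UNIV :: 'a set" m] by simp

lemma finite_words_length_in: "finite {w \<in> (L :: 'a::finite list set). length w = m}"
  by (rule finite_subset[OF _ finite_words_length[of m]]) auto

lemma count_len_le_card_power: "count_len (L :: 'a::finite list set) m \<le> card (UNIV :: 'a set) ^ m"
proof -
  have "count_len L m \<le> card {w :: 'a list. length w = m}"
    unfolding count_len_def by (rule card_mono[OF finite_words_length]) auto
  also have "\<dots> = card (UNIV :: 'a set) ^ m"
    using card_lists_length_eq[of "UNIV :: 'a set" m] by simp
  finally show ?thesis .
qed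

lemma exp_bounded_card: "exp_bounded (L :: 'a::finite list set) (card (UNIV :: 'a set))"
  unfolding exp_bounded_def
  by (rule exI[of _ 1]) (simp add: count_len_le_card_power flip: of_nat_power)

lemma exp_bounded_candidates_nonempty:
  "real (card (UNIV :: 'a set)) \<in> {l. 0 \<le> l \<and> exp_bounded (L :: 'a::finite list set) l}"
  using exp_bounded_card[of L] by simp

lemma growth_nonneg: "0 \<le> growth (L :: 'a::finite list set)"
  unfolding growth_eq_Inf using exp_bounded_candidates_nonempty[of L]
  by (intro cInf_greatest) blast+

lemma max_growth_nonneg:
  fixes A :: "'a::finite list set" and B :: "'b::finite list set"
  shows "0 \<le> max (growth A) (growth B)"
  by (rule order_trans[OF growth_nonneg max.cobounded1])

lemma exp_bounded_mono:
  assumes "exp_bounded L l" "0 \<le> l" "l \<le> l'"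
  shows "exp_bounded L l'"
proof -
  obtain c where c: "c > 0" "\<forall>m. real (count_len L m) \<le> c * l ^ m"
    using assms(1) unfolding exp_bounded_def by blast
  have "real (count_len L m) \<le> c * l' ^ m" for m
  proof -
    have "c * l ^ m \<le> c * l' ^ m"
      using c(1) power_mono[OF assms(3,2)] by (simp add: mult_left_mono)
    then show ?thesis using c(2) by (meson order_trans)
  qed
  then show ?thesis unfolding exp_bounded_def using c(1) by blast
qed

lemma exp_bounded_if_growth_less:
  assumes "growth (L :: 'a::finite list set) < l"
  shows "exp_bounded L l"
proof -
  have "{l. 0 \<le> l \<and> exp_bounded L l} \<noteq> {}"
    using exp_bounded_candidates_nonempty by blast
  then obtain s where "s \<in> {l. 0 \<le> l \<and> exp_bounded L l}" "s < l"
    using assms unfolding growth_eq_Inf by (meson cInf_lessD)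
  then show ?thesis using exp_bounded_mono[of L s l] by simp
qed

lemma growth_le_if_exp_bounded:
  assumes "0 \<le> g" "\<And>e. 0 < e \<Longrightarrow> exp_bounded L (g + e)"
  shows "growth L \<le> g"
proof (rule field_le_epsilon)
  fix e :: real
  assume "0 < e"
  then have "g + e \<in> {l. 0 \<le> l \<and> exp_bounded L l}" using assms by auto
  then show "growth L \<le> g + e"
    unfolding growth_eq_Inf by (rule cInf_lower) (auto intro: bdd_belowI[of _ 0])
qed

lemma growth_image_eq:
  assumes "inj f" "\<And>w. length (f w) = length w"
  shows "growth (f ` L) = growth L"
proof -
  have "count_len (f ` L) m = count_len L m" for m
  proof -
    have "{w \<in> f ` L. length w = m} = f ` {w \<in> L. length w = m}"
      using assms(2) by auto
    then show ?thesis
      unfolding count_len_def using inj_on_subset[OF assms(1)] by (simp add: card_image)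
  qed
  then show ?thesis by (simp add: growth_eq_Inf exp_bounded_def)
qed

lemma exp_bounded_Un:
  assumes "exp_bounded A l" "exp_bounded B l"
  shows "exp_bounded (A \<union> B) l"
proof -
  obtain a b where ab: "a > 0" "b > 0"
    "\<forall>m. real (count_len A m) \<le> a * l ^ m" "\<forall>m. real (count_len B m) \<le> b * l ^ m"
    using assms unfolding exp_bounded_def by blast
  have "real (count_len (A \<union> B) m) \<le> (a + b) * l ^ m" for m
  proof -
    have "{w \<in> A \<union> B. length w = m} = {w \<in> A. length w = m} \<union> {w \<in> B. length w = m}"
      by auto
    then have "count_len (A \<union> B) m \<le> count_len A m + count_len B m"
      unfolding count_len_def by (simp add: card_Un_le)
    then have "real (count_len (A \<union> B) m) \<le> real (count_len A m) + real (count_len B m)"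
      by (metis of_nat_add of_nat_le_iff)
    also have "\<dots> \<le> a * l ^ m + b * l ^ m"
      using ab(3,4) by (intro add_mono) auto
    finally show ?thesis by (simp add: distrib_right)
  qed
  then show ?thesis unfolding exp_bounded_def using ab(1,2) by (intro exI[of _ "a + b"]) auto
qed

lemma growth_Un_le:
  "growth (A \<union> B) \<le> max (growth A) (growth (B :: 'a::finite list set))"
proof (rule growth_le_if_exp_bounded)
  show "0 \<le> max (growth A) (growth B)" by (rule max_growth_nonneg)
  fix e :: real
  assume "0 < e"
  then have "growth A < max (growth A) (growth B) + e" "growth B < max (growth A) (growth B) + e"
    by auto
  then show "exp_bounded (A \<union> B) (max (growth A) (growth B) + e)"
    by (intro exp_bounded_Un exp_bounded_if_growth_less)
qed

lemma growth_empty: "growth ({} :: 'a::finite list set) = 0"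
proof -
  have "exp_bounded ({} :: 'a list set) e" if "0 < e" for e
    unfolding exp_bounded_def count_len_def using that by (intro exI[of _ 1]) auto
  then have "growth ({} :: 'a list set) \<le> 0" by (intro growth_le_if_exp_bounded) auto
  then show ?thesis using growth_nonneg by (rule antisym)
qed

lemma growth_UN_le:
  fixes X :: "'i \<Rightarrow> 'a::finite list set"
  assumes "finite I" "0 \<le> g" "\<And>i. i \<in> I \<Longrightarrow> growth (X i) \<le> g"
  shows "growth (\<Union>i\<in>I. X i) \<le> g"
  using assms(1,3)
proof (induction I rule: finite_induct)
  case empty
  then show ?case using assms(2) by (simp add: growth_empty)
next
  case (insert i I)
  then show ?case using order_trans[OF growth_Un_le[of "X i" "\<Union>i\<in>I. X i"]] by simp
qed

lemma count_len_le_by_injections: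
  fixes A L1 L2 :: "'a::finite list set"
  assumes "inj_on f A" "inj_on g A"
    and "\<And>w. w \<in> A \<Longrightarrow> length (f w) = length w + c \<and> length (g w) = length w + c"
    and "\<And>w. w \<in> A \<Longrightarrow> f w \<in> L1 \<or> g w \<in> L2"
  shows "count_len A m \<le> count_len L1 (m + c) + count_len L2 (m + c)"
proof -
  let ?A1 = "{w \<in> A. length w = m \<and> f w \<in> L1}"
  let ?A2 = "{w \<in> A. length w = m \<and> g w \<in> L2}"
  have "count_len A m \<le> card (?A1 \<union> ?A2)"
    unfolding count_len_def using assms(4)
    by (intro card_mono) (auto intro: finite_subset[OF _ finite_words_length[of m]])
  also have "\<dots> \<le> card ?A1 + card ?A2" by (rule card_Un_le)
  also have "card ?A1 \<le> count_len L1 (m + c)"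
    unfolding count_len_def using assms(3)
    by (intro card_inj_on_le[OF inj_on_subset[OF assms(1)]] finite_words_length_in) auto
  also have "card ?A2 \<le> count_len L2 (m + c)"
    unfolding count_len_def using assms(3)
    by (intro card_inj_on_le[OF inj_on_subset[OF assms(2)]] finite_words_length_in) auto
  finally show ?thesis by simp
qed

lemma growth_le_max_by_injections:
  fixes A L1 L2 :: "'a::finite list set"
  assumes "inj_on f A" "inj_on g A"
    and "\<And>w. w \<in> A \<Longrightarrow> length (f w) = length w + c \<and> length (g w) = length w + c"
    and "\<And>w. w \<in> A \<Longrightarrow> f w \<in> L1 \<or> g w \<in> L2"
  shows "growth A \<le> max (growth L1) (growth L2)"
proof (rule growth_le_if_exp_bounded)
  let ?g = "max (growth L1) (growth L2)"
  show "0 \<le> ?g" by (rule max_growth_nonneg)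
  fix e :: real
  assume "0 < e"
  then have "exp_bounded L1 (?g + e)" "exp_bounded L2 (?g + e)"
    by (auto intro!: exp_bounded_if_growth_less)
  then obtain c1 c2 where c: "c1 > 0" "c2 > 0"
    "\<forall>m. real (count_len L1 m) \<le> c1 * (?g + e) ^ m"
    "\<forall>m. real (count_len L2 m) \<le> c2 * (?g + e) ^ m"
    unfolding exp_bounded_def by blast
  have "real (count_len A m) \<le> ((c1 + c2) * (?g + e) ^ c) * (?g + e) ^ m" for m
  proof -
    have "real (count_len A m) \<le> real (count_len L1 (m + c)) + real (count_len L2 (m + c))"
      using count_len_le_by_injections[OF assms] by (metis of_nat_add of_nat_le_iff)
    also have "\<dots> \<le> c1 * (?g + e) ^ (m + c) + c2 * (?g + e) ^ (m + c)"
      using c(3,4) by (intro add_mono) auto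
    also have "\<dots> = ((c1 + c2) * (?g + e) ^ c) * (?g + e) ^ m"
      by (simp add: power_add algebra_simps)
    finally show ?thesis .
  qed
  moreover have "0 < (c1 + c2) * (?g + e) ^ c"
    using c(1,2) \<open>0 < e\<close> max_growth_nonneg[of L1 L2] by simp
  ultimately show "exp_bounded A (?g + e)" unfolding exp_bounded_def by blast
qed

definition lang_prefixes :: "'a list set \<Rightarrow> 'a list set" where
  "lang_prefixes B = {u. \<exists>t. u @ t \<in> B}"

lemma count_lang_prefixes_le:
  fixes B :: "'a::finite list set"
  assumes "\<And>u t. u @ t \<in> B \<Longrightarrow> \<exists>t'. length t' \<le> K \<and> u @ t' \<in> B"
  shows "count_len (lang_prefixes B) m \<le> (\<Sum>j\<le>K. count_len B (m + j))"
proof -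
  define f where "f u = u @ (SOME t. length t \<le> K \<and> u @ t \<in> B)" for u
  have f: "length (f u) - length u \<le> K \<and> f u \<in> B" if "u \<in> lang_prefixes B" for u
  proof -
    have "\<exists>t. length t \<le> K \<and> u @ t \<in> B"
      using that assms unfolding lang_prefixes_def by blast
    from someI_ex[OF this] show ?thesis unfolding f_def by simp
  qed
  have "inj_on f {u \<in> lang_prefixes B. length u = m}"
    by (rule inj_onI) (auto simp: f_def append_eq_append_conv)
  moreover have "f ` {u \<in> lang_prefixes B. length u = m} \<subseteq> (\<Union>j\<le>K. {w \<in> B. length w = m + j})"
  proof
    fix w assume "w \<in> f ` {u \<in> lang_prefixes B. length u = m}"
    then obtain u where "u \<in> lang_prefixes B" "length u = m" "w = f u" by blast
    moreover have "length (f u) \<ge> length u" by (simp add: f_def)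
    ultimately show "w \<in> (\<Union>j\<le>K. {w \<in> B. length w = m + j})"
      using f by (intro UN_I[of "length w - m"]) auto
  qed
  ultimately have "count_len (lang_prefixes B) m \<le> card (\<Union>j\<le>K. {w \<in> B. length w = m + j})"
    unfolding count_len_def by (intro card_inj_on_le) (auto intro: finite_words_length_in)
  also have "\<dots> \<le> (\<Sum>j\<le>K. count_len B (m + j))"
    unfolding count_len_def by (rule card_UN_le) simp
  finally show ?thesis .
qed

lemma growth_lang_prefixes_le:
  fixes B :: "'a::finite list set"
  assumes "\<And>u t. u @ t \<in> B \<Longrightarrow> \<exists>t'. length t' \<le> K \<and> u @ t' \<in> B"
  shows "growth (lang_prefixes B) \<le> growth B"
proof (rule growth_le_if_exp_bounded[OF growth_nonneg])
  fix e :: real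
  assume "0 < e"
  let ?l = "growth B + e"
  have "exp_bounded B ?l" using \<open>0 < e\<close> by (intro exp_bounded_if_growth_less) simp
  then obtain c where c: "c > 0" "\<forall>m. real (count_len B m) \<le> c * ?l ^ m"
    unfolding exp_bounded_def by blast
  have l: "0 < ?l" using growth_nonneg[of B] \<open>0 < e\<close> by linarith
  have "real (count_len (lang_prefixes B) m) \<le> (c * (\<Sum>j\<le>K. ?l ^ j)) * ?l ^ m" for m
  proof -
    have "real (count_len (lang_prefixes B) m) \<le> (\<Sum>j\<le>K. real (count_len B (m + j)))"
      unfolding of_nat_sum[symmetric] of_nat_le_iff by (rule count_lang_prefixes_le[OF assms])
    also have "\<dots> \<le> (\<Sum>j\<le>K. c * ?l ^ (m + j))"
      using c(2) by (intro sum_mono) simp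
    also have "\<dots> = (\<Sum>j\<le>K. c * ?l ^ j) * ?l ^ m"
      by (subst sum_distrib_right) (simp add: power_add mult_ac)
    also have "\<dots> = (c * (\<Sum>j\<le>K. ?l ^ j)) * ?l ^ m"
      by (simp add: sum_distrib_left)
    finally show ?thesis .
  qed
  moreover have "0 < c * (\<Sum>j\<le>K. ?l ^ j)"
    using c(1) l by (intro mult_pos_pos sum_pos) auto
  ultimately show "exp_bounded (lang_prefixes B) ?l" unfolding exp_bounded_def by blast
qed

definition conc :: "'a list set \<Rightarrow> 'a list set \<Rightarrow> 'a list set" where
  "conc R P = {x @ u | x u. x \<in> R \<and> u \<in> P}"

lemma count_conc_le:
  fixes R P :: "'a::finite list set"
  shows "count_len (conc R P) m \<le> (\<Sum>k\<le>m. count_len R k * count_len P (m - k))"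
proof -
  let ?S = "\<lambda>k. (\<lambda>(x, u). x @ u) ` ({x \<in> R. length x = k} \<times> {u \<in> P. length u = m - k})"
  have "{w \<in> conc R P. length w = m} \<subseteq> (\<Union>k\<le>m. ?S k)"
  proof
    fix w assume "w \<in> {w \<in> conc R P. length w = m}"
    then obtain x u where "x \<in> R" "u \<in> P" "w = x @ u" "length w = m"
      unfolding conc_def by blast
    then show "w \<in> (\<Union>k\<le>m. ?S k)"
      by (intro UN_I[of "length x"]) (auto intro!: image_eqI[of _ _ "(x, u)"])
  qed
  then have "count_len (conc R P) m \<le> card (\<Union>k\<le>m. ?S k)"
    unfolding count_len_def by (rule card_mono[rotated]) (auto intro: finite_words_length_in)
  also have "\<dots> \<le> (\<Sum>k\<le>m. card (?S k))" by (rule card_UN_le) simp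
  also have "\<dots> \<le> (\<Sum>k\<le>m. count_len R k * count_len P (m - k))"
    unfolding count_len_def card_cartesian_product[symmetric]
    by (intro sum_mono card_image_le finite_cartesian_product finite_words_length_in)
  finally show ?thesis .
qed

lemma exp_bounded_conc:
  fixes R P :: "'a::finite list set"
  assumes "exp_bounded R a" "exp_bounded P b" "0 \<le> b" "b < a"
  shows "exp_bounded (conc R P) a"
proof -
  obtain c1 c2 where c: "c1 > 0" "c2 > 0"
    "\<forall>k. real (count_len R k) \<le> c1 * a ^ k" "\<forall>k. real (count_len P k) \<le> c2 * b ^ k"
    using assms(1,2) unfolding exp_bounded_def by blast
  define r where "r = b / a"
  have a: "0 < a" and r: "0 \<le> r" "r < 1" using assms(3,4) by (auto simp: r_def)
  have "real (count_len (conc R P) m) \<le> (c1 * c2 / (1 - r)) * a ^ m" for m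
  proof -
    have "real (count_len (conc R P) m) \<le> (\<Sum>k\<le>m. real (count_len R k) * real (count_len P (m - k)))"
      unfolding of_nat_mult[symmetric] of_nat_sum[symmetric] of_nat_le_iff by (rule count_conc_le)
    also have "\<dots> \<le> (\<Sum>k\<le>m. (c1 * a ^ k) * (c2 * b ^ (m - k)))"
      using c assms(3) a by (intro sum_mono mult_mono) auto
    also have "\<dots> = (\<Sum>k\<le>m. c1 * c2 * a ^ m * r ^ (m - k))"
    proof (rule sum.cong[OF refl])
      fix k assume "k \<in> {..m}"
      then have "a ^ m = a ^ k * a ^ (m - k)" by (simp flip: power_add)
      then show "c1 * a ^ k * (c2 * b ^ (m - k)) = c1 * c2 * a ^ m * r ^ (m - k)"
        using a by (simp add: r_def power_divide)
    qed
    also have "\<dots> = c1 * c2 * a ^ m * (\<Sum>k<Suc m. r ^ k)"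
    proof -
      have "(\<Sum>k\<le>m. r ^ (m - k)) = (\<Sum>k<Suc m. r ^ k)"
        by (rule sum.reindex_bij_witness[of _ "\<lambda>k. m - k" "\<lambda>k. m - k"]) auto
      then show ?thesis by (simp only: sum_distrib_left[symmetric])
    qed
    also have "\<dots> \<le> c1 * c2 * a ^ m * (1 / (1 - r))"
    proof -
      have "(\<Sum>k<Suc m. r ^ k) = (1 - r ^ Suc m) / (1 - r)"
        using sum_gp_strict[of r "Suc m"] r by simp
      also have "\<dots> \<le> 1 / (1 - r)" using r by (intro divide_right_mono) auto
      finally show ?thesis using c(1,2) a by (intro mult_left_mono) auto
    qed
    finally show ?thesis by simp
  qed
  moreover have "0 < c1 * c2 / (1 - r)" using c(1,2) r by simp
  ultimately show ?thesis unfolding exp_bounded_def by blast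
qed

lemma growth_conc_le:
  fixes R P :: "'a::finite list set"
  shows "growth (conc R P) \<le> max (growth R) (growth P)"
proof (rule growth_le_if_exp_bounded)
  let ?g = "max (growth R) (growth P)"
  show "0 \<le> ?g" by (rule max_growth_nonneg)
  fix e :: real
  assume "0 < e"
  then have "exp_bounded R (?g + e)" "exp_bounded P (?g + e / 2)"
    by (auto intro!: exp_bounded_if_growth_less)
  moreover have "0 \<le> ?g + e / 2" "?g + e / 2 < ?g + e"
    using \<open>0 < e\<close> \<open>0 \<le> ?g\<close> by auto
  ultimately show "exp_bounded (conc R P) (?g + e)" by (rule exp_bounded_conc)
qed

lemma count_len_le_by_truncation:
  fixes L C :: "'a::finite list set"
  assumes "\<And>z. z \<in> L \<Longrightarrow> take (length z - k) z \<in> C" "k \<le> n"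
  shows "count_len L n \<le> count_len C (n - k) * card (UNIV :: 'a set) ^ k"
proof -
  let ?split = "\<lambda>z. (take (n - k) z, drop (n - k) z)"
  have "count_len L n \<le> card ({w \<in> C. length w = n - k} \<times> {w :: 'a list. length w = k})"
    unfolding count_len_def
  proof (rule card_inj_on_le[of ?split])
    show "inj_on ?split {w \<in> L. length w = n}"
      by (rule inj_onI) (metis append_take_drop_id prod.inject)
    show "?split ` {w \<in> L. length w = n} \<subseteq> {w \<in> C. length w = n - k} \<times> {w. length w = k}"
      using assms by auto
  qed (intro finite_cartesian_product finite_words_length_in finite_words_length)
  also have "\<dots> = count_len C (n - k) * card (UNIV :: 'a set) ^ k"
    using card_lists_length_eq[of "UNIV :: 'a set" k] by (simp add: count_len_def card_cartesian_product)
  finally show ?thesis .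
qed

lemma growth_le_by_truncation:
  fixes L C :: "'a::finite list set"
  assumes "\<And>z. z \<in> L \<Longrightarrow> k \<le> length z \<and> take (length z - k) z \<in> C"
  shows "growth L \<le> growth C"
proof (rule growth_le_if_exp_bounded[OF growth_nonneg])
  fix e :: real
  assume "0 < e"
  let ?l = "growth C + e" and ?N = "real (card (UNIV :: 'a set))"
  have "exp_bounded C ?l" using \<open>0 < e\<close> by (intro exp_bounded_if_growth_less) simp
  then obtain c where c: "c > 0" "\<forall>m. real (count_len C m) \<le> c * ?l ^ m"
    unfolding exp_bounded_def by blast
  have l: "0 < ?l" using growth_nonneg[of C] \<open>0 < e\<close> by linarith
  have N: "0 < ?N" by (simp add: card_gt_0_iff)
  have "real (count_len L n) \<le> (c * ?N ^ k / ?l ^ k) * ?l ^ n" for n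
  proof (cases "k \<le> n")
    case False
    then have "{w \<in> L. length w = n} = {}" using assms by fastforce
    then have "count_len L n = 0" unfolding count_len_def by (metis card.empty)
    then show ?thesis using c(1) l N by simp
  next
    case True
    have "real (count_len L n) \<le> real (count_len C (n - k)) * ?N ^ k"
      using count_len_le_by_truncation[of L k C n] assms True
      by (metis (no_types, lifting) of_nat_le_iff of_nat_mult of_nat_power)
    also have "\<dots> \<le> c * ?l ^ (n - k) * ?N ^ k"
      using c(2) by (intro mult_right_mono) auto
    also have "\<dots> = (c * ?N ^ k / ?l ^ k) * ?l ^ n"
      using l True by (simp add: field_simps flip: power_add)
    finally show ?thesis .
  qed
  moreover have "0 < c * ?N ^ k / ?l ^ k" using c(1) l N by simp
  ultimately show "exp_bounded L ?l" unfolding exp_bounded_def by blast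
qed

lemma bounded_completions_if_finite_key:
  fixes key :: "'b list \<Rightarrow> 'k::finite"
  assumes "\<And>u u' t. key u = key u' \<Longrightarrow> u @ t \<in> B \<longleftrightarrow> u' @ t \<in> B"
  obtains K where "\<And>u t. u @ t \<in> B \<Longrightarrow> \<exists>t'. length t' \<le> K \<and> u @ t' \<in> B"
proof -
  define T where "T k = {t. \<exists>u. key u = k \<and> u @ t \<in> B}" for k
  define h where "h k = length (SOME t. t \<in> T k)" for k
  show ?thesis
  proof (rule that[of "Max (range h)"])
    fix u t assume "u @ t \<in> B"
    then have "t \<in> T (key u)" unfolding T_def by blast
    then have "(SOME t. t \<in> T (key u)) \<in> T (key u)" by (rule someI)
    then have "u @ (SOME t. t \<in> T (key u)) \<in> B" using assms unfolding T_def by blast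
    moreover have "h (key u) \<le> Max (range h)" by (rule Max_ge) auto
    ultimately show "\<exists>t'. length t' \<le> Max (range h) \<and> u @ t' \<in> B"
      unfolding h_def by blast
  qed
qed

lemma wbar_Nil [simp]: "wbar bar [] = []"
  and wbar_Cons [simp]: "wbar bar (a # u) = wbar bar u @ [bar a]"
  and wbar_append [simp]: "wbar bar (u @ v) = wbar bar v @ wbar bar u"
  and length_wbar [simp]: "length (wbar bar u) = length u"
  by (simp_all add: wbar_def)

lemma wbar_wbar [simp]: "(\<And>a. bar (bar a) = a) \<Longrightarrow> wbar bar (wbar bar u) = u"
  by (simp add: wbar_def rev_map comp_def)

lemma Bset_bounded_completions:
  fixes d1 :: "'q1::finite \<Rightarrow> 'a \<Rightarrow> 'q1" and d2 :: "'q2::finite \<Rightarrow> 'a \<Rightarrow> 'q2"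
  obtains K where "\<And>u t. u @ t \<in> Bset bar d1 d2 p1 p2 e1 e2 \<Longrightarrow>
    \<exists>t'. length t' \<le> K \<and> u @ t' \<in> Bset bar d1 d2 p1 p2 e1 e2"
proof (rule bounded_completions_if_finite_key[OF _ that])
  fix u u' t :: "'a list"
  assume "(foldl d1 p1 u, \<lambda>q. foldl d2 q (wbar bar u)) = (foldl d1 p1 u', \<lambda>q. foldl d2 q (wbar bar u'))"
  then show "u @ t \<in> Bset bar d1 d2 p1 p2 e1 e2 \<longleftrightarrow> u' @ t \<in> Bset bar d1 d2 p1 p2 e1 e2"
    unfolding Bset_def by (simp add: fun_eq_iff)
qed

lemma wbar_Bset_bounded_completions:
  fixes d1 :: "'q1::finite \<Rightarrow> 'a \<Rightarrow> 'q1" and d2 :: "'q2::finite \<Rightarrow> 'a \<Rightarrow> 'q2"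
  assumes "\<And>a. bar (bar a) = a"
  obtains K where "\<And>u t. u @ t \<in> wbar bar ` Bset bar d1 d2 p1 p2 e1 e2 \<Longrightarrow>
    \<exists>t'. length t' \<le> K \<and> u @ t' \<in> wbar bar ` Bset bar d1 d2 p1 p2 e1 e2"
proof (rule bounded_completions_if_finite_key[OF _ that])
  have mem: "w \<in> wbar bar ` A \<longleftrightarrow> wbar bar w \<in> A" for w A
    using assms by (auto intro: image_eqI[of _ _ "wbar bar w"])
  fix u u' t :: "'a list"
  assume "(\<lambda>q. foldl d1 q (wbar bar u), foldl d2 p2 u) = (\<lambda>q. foldl d1 q (wbar bar u'), foldl d2 p2 u')"
  then show "u @ t \<in> wbar bar ` Bset bar d1 d2 p1 p2 e1 e2 \<longleftrightarrow> u' @ t \<in> wbar bar ` Bset bar d1 d2 p1 p2 e1 e2"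
    unfolding mem Bset_def using assms by (simp add: fun_eq_iff)
qed

lemma lpath_append:
  "lpath V E s u t \<Longrightarrow> lpath V E t w f \<Longrightarrow> lpath V E s (u @ w) f"
  by (induction rule: lpath.induct) (auto intro: lpath.intros)

lemma lpath_mono:
  "lpath V E s w t \<Longrightarrow> V \<subseteq> V' \<Longrightarrow> (\<And>x a y. E x a y \<Longrightarrow> E' x a y) \<Longrightarrow> lpath V' E' s w t"
  by (induction rule: lpath.induct) (blast intro: lpath.intros)+

locale bridge_automaton =
  fixes bar :: "'a::finite \<Rightarrow> 'a" and \<kappa> :: nat
    and d1 :: "'q1::finite \<Rightarrow> 'a \<Rightarrow> 'q1" and q01 :: 'q1 and F1 :: "'q1 set"
    and d2 :: "'q2::finite \<Rightarrow> 'a \<Rightarrow> 'q2" and q02 :: 'q2 and F2 :: "'q2 set"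
    and L1 L2 :: "'a list set"
  assumes involution: "\<And>a. bar (bar a) = a"
    and kappa_pos: "0 < \<kappa>"
    and L1_lang: "L1 = dfa_lang d1 q01 F1"
    and L2_lang: "wbar bar ` L2 = dfa_lang d2 q02 F2"
begin

abbreviation "wb \<equiv> wbar bar"
abbreviation "V \<equiv> aut_states bar \<kappa> d1 q01 d2 q02"
abbreviation "E \<equiv> aut_arc bar \<kappa> d1 q01 F1 d2 q02 F2"
abbreviation "Ini \<equiv> aut_init bar \<kappa> d1 q01 d2 q02"
abbreviation "Fin \<equiv> aut_fin bar \<kappa> d1 q01 d2 q02"
abbreviation "U \<equiv> aut_useful bar \<kappa> d1 q01 F1 d2 q02 F2"
abbreviation "TE \<equiv> taut_arc bar \<kappa> d1 q01 F1 d2 q02 F2"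
abbreviation "M \<equiv> aut_M bar \<kappa> d1 q01 F1 d2 q02 F2"
abbreviation "R \<equiv> R_mu bar \<kappa> d1 q01 F1 d2 q02 F2"
abbreviation "B \<equiv> B_mu bar d1 d2"
abbreviation "\<sigma> \<equiv> sigma_max bar \<kappa> d1 q01 F1 d2 q02 F2"
abbreviation "\<rho> \<equiv> rho_max bar \<kappa> d1 q01 F1 d2 q02 F2"

lemma wb_wb [simp]: "wb (wb u) = u"
  using involution by simp

lemma inj_wb: "inj wb"
  by (metis injI wb_wb)

lemma mem_wb_image: "w \<in> wb ` A \<longleftrightarrow> wb w \<in> A"
  by (auto intro: image_eqI[of _ _ "wb w"])

lemma L2_iff: "w \<in> L2 \<longleftrightarrow> wb w \<in> dfa_lang d2 q02 F2"
  using L2_lang mem_wb_image by (metis wb_wb)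

lemma finite_V: "finite V"
proof (rule finite_subset)
  show "V \<subseteq> UNIV \<times> UNIV \<times> UNIV \<times> {..\<kappa>}" unfolding aut_states_def by auto
qed simp

lemma finite_M: "finite M"
proof (rule finite_subset)
  show "M \<subseteq> V \<times> V" unfolding aut_M_def aut_init_def aut_fin_def by auto
qed (simp add: finite_V)

lemma arcE:
  assumes "E s a t"
  obtains P q1 q2 l l' where
    "s = (P, d1 q1 (bar a), d2 q2 (bar a), l)" "t = ((d1 (fst P) a, d2 (snd P) a), q1, q2, l')"
    "(l = 0 \<and> l' = 0 \<and> d1 q1 (bar a) \<notin> F1 \<and> d2 q2 (bar a) \<notin> F2) \<or>
     (l = 0 \<and> l' = 1 \<and> (d1 q1 (bar a) \<in> F1 \<or> d2 q2 (bar a) \<in> F2)) \<or>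
     (1 \<le> l \<and> l < \<kappa> \<and> l' = l + 1)"
  using assms unfolding aut_arc_def by blast

lemma lpath_components:
  assumes "lpath V E s w t"
  shows "fst t = (foldl d1 (fst (fst s)) w, foldl d2 (snd (fst s)) w)
    \<and> fst (snd s) = foldl d1 (fst (snd t)) (wb w)
    \<and> fst (snd (snd s)) = foldl d2 (fst (snd (snd t))) (wb w)"
  using assms
proof (induction rule: lpath.induct)
  case (lpath_cons s a s' w t)
  from lpath_cons(1) show ?case
    by (rule arcE) (use lpath_cons(3) in simp)
qed simp

lemma lpath_level_positive:
  assumes "lpath V E s w t" "1 \<le> snd (snd (snd s))"
  shows "snd (snd (snd t)) = snd (snd (snd s)) + length w"
  using assms
proof (induction rule: lpath.induct)
  case (lpath_cons s a s' w t)
  from lpath_cons(1) show ?case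
    by (rule arcE) (use lpath_cons(3,4) in auto)
qed simp

lemma lpath_level_zero:
  assumes "lpath V E s w t" "snd (snd (snd s)) = 0"
  shows "snd (snd (snd t)) = 0 \<or>
    (\<exists>y \<alpha>. w = y @ \<alpha> \<and> length \<alpha> = snd (snd (snd t)) \<and>
      (foldl d1 (fst (snd t)) (wb \<alpha>) \<in> F1 \<or> foldl d2 (fst (snd (snd t))) (wb \<alpha>) \<in> F2))"
  using assms
proof (induction rule: lpath.induct)
  case (lpath_cons s a s' w t)
  from lpath_cons(1) obtain P q1 q2 l l' where
    s: "s = (P, d1 q1 (bar a), d2 q2 (bar a), l)" and
    s': "s' = ((d1 (fst P) a, d2 (snd P) a), q1, q2, l')" and
    c: "(l = 0 \<and> l' = 0 \<and> d1 q1 (bar a) \<notin> F1 \<and> d2 q2 (bar a) \<notin> F2) \<or>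
        (l = 0 \<and> l' = 1 \<and> (d1 q1 (bar a) \<in> F1 \<or> d2 q2 (bar a) \<in> F2)) \<or>
        (1 \<le> l \<and> l < \<kappa> \<and> l' = l + 1)"
    by (rule arcE)
  have "l = 0" using lpath_cons(4) s by simp
  show ?case
  proof (cases "l' = 0")
    case True
    with lpath_cons(3) s' show ?thesis by (fastforce intro: exI[of _ "a # _"])
  next
    case False
    then have "l' = 1" and trigger: "d1 q1 (bar a) \<in> F1 \<or> d2 q2 (bar a) \<in> F2"
      using c \<open>l = 0\<close> by auto
    then have "snd (snd (snd t)) = length (a # w)"
      using lpath_level_positive[OF lpath_cons(2)] s' by simp
    moreover have "q1 = foldl d1 (fst (snd t)) (wb w)" "q2 = foldl d2 (fst (snd (snd t))) (wb w)"
      using lpath_components[OF lpath_cons(2)] s' by auto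
    ultimately show ?thesis using trigger by (intro disjI2 exI[of _ "[]"] exI[of _ "a # w"]) auto
  qed
qed simp

lemma lpath_trim:
  assumes "lpath V E s w t" "i \<in> Ini" "lpath V E i w0 s" "f \<in> Fin" "lpath V E t w1 f"
  shows "lpath U TE s w t"
  using assms
proof (induction arbitrary: w0 rule: lpath.induct)
  case (lpath_nil s)
  then have "s \<in> U" unfolding aut_useful_def by blast
  then show ?case by (rule lpath.lpath_nil)
next
  case (lpath_cons s a s' w t)
  have V: "s \<in> V" "s' \<in> V" using lpath_cons(1) unfolding aut_arc_def by auto
  have "lpath V E s [a] s'" using lpath_cons(1) V by (auto intro: lpath.intros)
  then have i_s': "lpath V E i (w0 @ [a]) s'" by (rule lpath_append[OF lpath_cons(5)])
  have "lpath V E s (a # w @ w1) f"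
    using lpath_cons(1,2,7) by (auto intro: lpath.intros lpath_append)
  then have "s \<in> U" unfolding aut_useful_def using V lpath_cons(4,5,6) by blast
  moreover have "s' \<in> U"
    using lpath_append[OF lpath_cons(2,7)] i_s' V lpath_cons(4,6) unfolding aut_useful_def by blast
  ultimately have "TE s a s'" unfolding taut_arc_def using lpath_cons(1) by blast
  then show ?case using lpath_cons(3)[OF lpath_cons(4) i_s' lpath_cons(6,7)] by (rule lpath.lpath_cons)
qed

lemma lpath_trim_in_U: "lpath U TE s w t \<Longrightarrow> s \<in> U \<and> t \<in> U"
  by (induction rule: lpath.induct) (auto simp: taut_arc_def)

lemma lpath_untrim: "lpath U TE s w t \<Longrightarrow> lpath V E s w t"
  by (erule lpath_mono) (auto simp: aut_useful_def taut_arc_def)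

lemma accepting_lpath_bridge:
  assumes "lpath V E i x F" "i \<in> Ini" "F \<in> Fin" "w \<in> B (I, F)"
  defines "\<alpha> \<equiv> drop (length x - \<kappa>) x"
  shows "\<kappa> \<le> length x \<and> (x @ w @ wb \<alpha> \<in> L1 \<or> \<alpha> @ w @ wb x \<in> L2)"
proof -
  obtain P e1 e2 l where F: "F = (P, e1, e2, l)" by (cases F) auto
  have "l = \<kappa>" using assms(3) F unfolding aut_fin_def by simp
  obtain a1 a2 where i: "i = ((q01, q02), a1, a2, 0)" using assms(2) unfolding aut_init_def by blast
  have P: "P = (foldl d1 q01 x, foldl d2 q02 x)" using lpath_components[OF assms(1)] i F by simp
  obtain y \<alpha>' where x: "x = y @ \<alpha>'" "length \<alpha>' = \<kappa>"
    and trigger: "foldl d1 e1 (wb \<alpha>') \<in> F1 \<or> foldl d2 e2 (wb \<alpha>') \<in> F2"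
    using lpath_level_zero[OF assms(1)] i F \<open>l = \<kappa>\<close> kappa_pos by auto
  have "\<alpha> = \<alpha>'" unfolding \<alpha>_def using x by simp
  have w: "foldl d1 (foldl d1 q01 x) w = e1" "foldl d2 (foldl d2 q02 x) (wb w) = e2"
    using assms(4) F P by (simp_all add: B_mu_def Bset_def)
  have "x @ w @ wb \<alpha> \<in> L1 \<or> wb (\<alpha> @ w @ wb x) \<in> dfa_lang d2 q02 F2"
    using trigger w unfolding L1_lang dfa_lang_def \<open>\<alpha> = \<alpha>'\<close> by auto
  then show ?thesis using x L2_iff by simp
qed

lemma growth_B_le:
  assumes "\<mu> \<in> M"
  shows "growth (B \<mu>) \<le> max (growth L1) (growth L2)"
proof -
  obtain I F where \<mu>: "\<mu> = (I, F)" by (cases \<mu>)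
  have "F \<in> U" "F \<in> Fin" using assms \<mu> unfolding aut_M_def by auto
  then obtain i x where x: "i \<in> Ini" "lpath V E i x F" unfolding aut_useful_def by blast
  let ?\<alpha> = "drop (length x - \<kappa>) x"
  have bridge: "\<kappa> \<le> length x \<and> (x @ w @ wb ?\<alpha> \<in> L1 \<or> ?\<alpha> @ w @ wb x \<in> L2)"
    if "w \<in> B \<mu>" for w
    using accepting_lpath_bridge[OF x(2,1) \<open>F \<in> Fin\<close>, of w I] that \<mu> by simp
  show ?thesis
  proof (rule growth_le_max_by_injections)
    show "inj_on (\<lambda>w. x @ w @ wb ?\<alpha>) (B \<mu>)" "inj_on (\<lambda>w. ?\<alpha> @ w @ wb x) (B \<mu>)"
      by (auto intro: inj_onI)
    fix w assume "w \<in> B \<mu>"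
    then show "length (x @ w @ wb ?\<alpha>) = length w + (length x + \<kappa>) \<and>
        length (?\<alpha> @ w @ wb x) = length w + (length x + \<kappa>)"
      "x @ w @ wb ?\<alpha> \<in> L1 \<or> ?\<alpha> @ w @ wb x \<in> L2"
      using bridge by auto
  qed
qed

lemma growth_R_le:
  assumes "\<mu> \<in> M"
  shows "growth (R \<mu>) \<le> max (growth L1) (growth L2)"
proof -
  obtain I F where \<mu>: "\<mu> = (I, F)" by (cases \<mu>)
  have I: "I \<in> Ini" and F: "F \<in> Fin" using assms \<mu> unfolding aut_M_def by auto
  then obtain w0 where "w0 \<in> B \<mu>"
    unfolding \<mu> aut_fin_def aut_states_def B_mu_def by (auto split: prod.splits)
  let ?\<alpha> = "\<lambda>x. drop (length x - \<kappa>) x"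
  have bridge: "\<kappa> \<le> length x \<and> (x @ w0 @ wb (?\<alpha> x) \<in> L1 \<or> ?\<alpha> x @ w0 @ wb x \<in> L2)"
    if "x \<in> R \<mu>" for x
    using that accepting_lpath_bridge[OF _ I F \<open>w0 \<in> B \<mu>\<close>[unfolded \<mu>]] lpath_untrim
    unfolding \<mu> R_mu_def by simp
  show ?thesis
  proof (rule growth_le_max_by_injections)
    show "inj_on (\<lambda>x. x @ w0 @ wb (?\<alpha> x)) (R \<mu>)"
    proof (rule inj_onI)
      fix x x' assume "x \<in> R \<mu>" "x' \<in> R \<mu>" and eq: "x @ w0 @ wb (?\<alpha> x) = x' @ w0 @ wb (?\<alpha> x')"
      then have "length x = length x'" using bridge[of x] bridge[of x'] arg_cong[OF eq, of length] by simp
      then show "x = x'" using eq by simp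
    qed
    show "inj_on (\<lambda>x. ?\<alpha> x @ w0 @ wb x) (R \<mu>)"
    proof (rule inj_onI)
      fix x x' assume "x \<in> R \<mu>" "x' \<in> R \<mu>" and eq: "?\<alpha> x @ w0 @ wb x = ?\<alpha> x' @ w0 @ wb x'"
      then have "wb x = wb x'" using bridge[of x] bridge[of x'] by (simp add: append_eq_append_conv)
      then show "x = x'" using inj_wb by (simp add: inj_eq)
    qed
    fix x assume "x \<in> R \<mu>"
    then show "length (x @ w0 @ wb (?\<alpha> x)) = length x + (length w0 + \<kappa>) \<and>
        length (?\<alpha> x @ w0 @ wb x) = length x + (length w0 + \<kappa>)"
      "x @ w0 @ wb (?\<alpha> x) \<in> L1 \<or> ?\<alpha> x @ w0 @ wb x \<in> L2"
      using bridge by auto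
  qed
qed

definition triggers :: "'a list \<Rightarrow> 'a list \<Rightarrow> nat \<Rightarrow> bool" where
  "triggers x v j \<longleftrightarrow>
     foldl d1 (foldl d1 q01 (x @ v)) (wb (drop j x)) \<in> F1 \<or>
     foldl d2 (foldl d2 q02 (x @ wb v)) (wb (drop j x)) \<in> F2"

text \<open>The state of \<open>\<A>\<close> after the first \<open>i\<close> letters of \<open>x\<close>, guessing the bridge
  \<open>drop i x @ v @ wb (drop i x)\<close>, with the level counter started at position \<open>j\<close>.\<close>
definition run :: "'a list \<Rightarrow> 'a list \<Rightarrow> nat \<Rightarrow> nat \<Rightarrow> ('q1, 'q2) astate" where
  "run x v j i =
     ((foldl d1 q01 (take i x), foldl d2 q02 (take i x)),
      foldl d1 (foldl d1 q01 (x @ v)) (wb (drop i x)),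
      foldl d2 (foldl d2 q02 (x @ wb v)) (wb (drop i x)), i - j)"

lemma run_bridge: "drop i x @ v @ wb (drop i x) \<in> B (s, run x v j i)"
proof -
  have "foldl d1 q01 x = foldl d1 (foldl d1 q01 (take i x)) (drop i x)"
    "foldl d2 q02 x = foldl d2 (foldl d2 q02 (take i x)) (drop i x)"
    by (metis append_take_drop_id foldl_append)+
  then show ?thesis by (simp add: B_mu_def run_def Bset_def)
qed

lemma run_in_V: "i \<le> j + \<kappa> \<Longrightarrow> run x v j i \<in> V"
  using run_bridge[of i x v undefined j]
  by (auto simp: aut_states_def Q12_def run_def B_mu_def)

lemma run_arc:
  assumes "triggers x v j" "\<And>i. i < j \<Longrightarrow> \<not> triggers x v i" "i < j + \<kappa>" "j + \<kappa> \<le> length x"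
  shows "E (run x v j i) (x ! i) (run x v j (Suc i))"
proof -
  have "i < length x" using assms(3,4) by linarith
  then have drop: "drop i x = x ! i # drop (Suc i) x" and take: "take (Suc i) x = take i x @ [x ! i]"
    by (simp_all add: Cons_nth_drop_Suc take_Suc_conv_app_nth)
  have levels: "(i - j = 0 \<and> Suc i - j = 0 \<and> \<not> triggers x v i) \<or>
      (i - j = 0 \<and> Suc i - j = 1 \<and> triggers x v i) \<or>
      (1 \<le> i - j \<and> i - j < \<kappa> \<and> Suc i - j = i - j + 1)"
    using assms(1-3) by (cases "i < j"; cases "i = j") auto
  show ?thesis
    unfolding aut_arc_def
  proof (intro conjI run_in_V exI)
    let ?P = "fst (run x v j i)"
    let ?q1 = "fst (snd (run x v j (Suc i)))" and ?q2 = "fst (snd (snd (run x v j (Suc i))))"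
    show "run x v j i = (?P, d1 ?q1 (bar (x ! i)), d2 ?q2 (bar (x ! i)), i - j)"
      "run x v j (Suc i) = ((d1 (fst ?P) (x ! i), d2 (snd ?P) (x ! i)), ?q1, ?q2, Suc i - j)"
      by (simp_all add: run_def drop take)
    show "(i - j = 0 \<and> Suc i - j = 0 \<and> d1 ?q1 (bar (x ! i)) \<notin> F1 \<and> d2 ?q2 (bar (x ! i)) \<notin> F2) \<or>
        (i - j = 0 \<and> Suc i - j = 1 \<and> (d1 ?q1 (bar (x ! i)) \<in> F1 \<or> d2 ?q2 (bar (x ! i)) \<in> F2)) \<or>
        (1 \<le> i - j \<and> i - j < \<kappa> \<and> Suc i - j = i - j + 1)"
      using levels by (simp add: triggers_def run_def drop)
  qed (use assms(3) in simp_all)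
qed

lemma run_lpath:
  assumes "triggers x v j" "\<And>i. i < j \<Longrightarrow> \<not> triggers x v i" "j + \<kappa> \<le> length x"
  shows "lpath V E (run x v j 0) (take (j + \<kappa>) x) (run x v j (j + \<kappa>))"
proof -
  have "lpath V E (run x v j i) (drop i (take (j + \<kappa>) x)) (run x v j (j + \<kappa>))"
    if "i \<le> j + \<kappa>" for i
    using that
  proof (induction rule: inc_induct)
    case base
    show ?case by (simp add: lpath.lpath_nil run_in_V)
  next
    case (step i)
    have "i < length (take (j + \<kappa>) x)" using step(2) assms(3) by simp
    then have "drop i (take (j + \<kappa>) x) = take (j + \<kappa>) x ! i # drop (Suc i) (take (j + \<kappa>) x)"
      by (rule Cons_nth_drop_Suc[symmetric])
    then show ?case
      using lpath.lpath_cons[OF run_arc[OF assms(1,2) step(2) assms(3)] step(3)] step(2) by simp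
  qed
  from this[of 0] show ?thesis by simp
qed

lemma accepting_lpath_in_R:
  assumes "lpath V E i w f" "i \<in> Ini" "f \<in> Fin"
  shows "(i, f) \<in> M \<and> w \<in> R (i, f)"
proof -
  have "i \<in> V" "f \<in> V" using assms(2,3) unfolding aut_init_def aut_fin_def by auto
  then have "lpath U TE i w f"
    using lpath_trim[OF assms(1,2) _ assms(3)] by (auto intro: lpath.lpath_nil)
  then show ?thesis using lpath_trim_in_U assms(2,3) unfolding aut_M_def R_mu_def by auto
qed

lemma factor_through_M:
  assumes "\<kappa> \<le> length x" "triggers x v (length x - \<kappa>)"
  obtains \<mu> x' y where "\<mu> \<in> M" "x = x' @ y" "x' \<in> R \<mu>" "y @ v @ wb y \<in> B \<mu>"
proof -
  define j where "j = (LEAST j. triggers x v j)"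
  have j: "triggers x v j" "\<And>i. i < j \<Longrightarrow> \<not> triggers x v i" "j + \<kappa> \<le> length x"
    using assms LeastI[of "triggers x v"] Least_le[of "triggers x v"] not_less_Least[of _ "triggers x v"]
    unfolding j_def by (blast, blast, fastforce)
  let ?\<mu> = "(run x v j 0, run x v j (j + \<kappa>))"
  have "run x v j 0 \<in> Ini" "run x v j (j + \<kappa>) \<in> Fin"
    using run_in_V[of 0 j x v] run_in_V[of "j + \<kappa>" j x v]
    by (auto simp: aut_init_def aut_fin_def run_def)
  then have "?\<mu> \<in> M \<and> take (j + \<kappa>) x \<in> R ?\<mu>"
    by (intro accepting_lpath_in_R run_lpath j)
  then show ?thesis
    using run_bridge[of "j + \<kappa>" x v "run x v j 0" j] by (intro that[of ?\<mu>]) auto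
qed

lemma L1_truncation:
  assumes "\<forall>w \<in> L1. \<exists>\<alpha> u v. length \<alpha> = \<kappa> \<and> w = u @ \<alpha> @ v @ wb \<alpha>" "z \<in> L1"
  shows "\<kappa> \<le> length z \<and> take (length z - \<kappa>) z \<in> (\<Union>\<mu>\<in>M. conc (R \<mu>) (lang_prefixes (B \<mu>)))"
proof -
  obtain \<alpha> u v where \<alpha>: "length \<alpha> = \<kappa>" and z: "z = (u @ \<alpha>) @ v @ wb \<alpha>" using assms by auto
  have "\<kappa> \<le> length (u @ \<alpha>)" using \<alpha> by simp
  moreover have "triggers (u @ \<alpha>) v (length (u @ \<alpha>) - \<kappa>)"
    using assms(2) \<alpha> unfolding z triggers_def L1_lang dfa_lang_def by simp
  ultimately obtain \<mu> x' y where "\<mu> \<in> M" "u @ \<alpha> = x' @ y" "x' \<in> R \<mu>" "y @ v @ wb y \<in> B \<mu>"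
    by (rule factor_through_M)
  moreover have "take (length z - \<kappa>) z = u @ \<alpha> @ v" using \<alpha> z by simp
  ultimately show ?thesis
    using \<alpha> z unfolding conc_def lang_prefixes_def by fastforce
qed

lemma L2_truncation:
  assumes "\<forall>w \<in> L2. \<exists>\<alpha> u v. length \<alpha> = \<kappa> \<and> w = \<alpha> @ v @ wb \<alpha> @ u" "z \<in> wb ` L2"
  shows "\<kappa> \<le> length z \<and> take (length z - \<kappa>) z \<in> (\<Union>\<mu>\<in>M. conc (R \<mu>) (lang_prefixes (wb ` B \<mu>)))"
proof -
  obtain \<alpha> u v where \<alpha>: "length \<alpha> = \<kappa>" and "wb z = \<alpha> @ v @ wb \<alpha> @ u"
    using assms mem_wb_image by blast
  then have "wb (wb z) = wb (\<alpha> @ v @ wb \<alpha> @ u)" by simp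
  then have z: "z = (wb u @ \<alpha>) @ wb v @ wb \<alpha>" by simp
  have "\<kappa> \<le> length (wb u @ \<alpha>)" using \<alpha> by simp
  moreover have "triggers (wb u @ \<alpha>) v (length (wb u @ \<alpha>) - \<kappa>)"
    using assms(2) \<alpha> L2_lang unfolding z triggers_def dfa_lang_def by auto
  ultimately obtain \<mu> x' y where "\<mu> \<in> M" "wb u @ \<alpha> = x' @ y" "x' \<in> R \<mu>" "y @ v @ wb y \<in> B \<mu>"
    by (rule factor_through_M)
  moreover have "take (length z - \<kappa>) z = x' @ y @ wb v"
    using \<alpha> z \<open>wb u @ \<alpha> = x' @ y\<close> by simp
  moreover have "(y @ wb v) @ wb y \<in> wb ` B \<mu>"
    using \<open>y @ v @ wb y \<in> B \<mu>\<close> by (simp add: mem_wb_image)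
  ultimately show ?thesis
    using \<alpha> z unfolding conc_def lang_prefixes_def by fastforce
qed

lemma growth_B_le_sigma: "\<mu> \<in> M \<Longrightarrow> growth (B \<mu>) \<le> \<sigma>"
  unfolding sigma_max_def by (intro Max_ge) (simp_all add: finite_M)

lemma growth_R_le_rho: "\<mu> \<in> M \<Longrightarrow> growth (R \<mu>) \<le> \<rho>"
  unfolding rho_max_def by (intro Max_ge) (simp_all add: finite_M)

lemma sigma_nonneg: "0 \<le> \<sigma>"
  unfolding sigma_max_def by (intro Max_ge) (simp_all add: finite_M)

lemma sigma_le: "\<sigma> \<le> max (growth L1) (growth L2)"
  unfolding sigma_max_def using growth_B_le max_growth_nonneg[of L1 L2]
  by (intro Max.boundedI) (auto simp: finite_M)

lemma rho_le: "\<rho> \<le> max (growth L1) (growth L2)"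
  unfolding rho_max_def using growth_R_le max_growth_nonneg[of L1 L2]
  by (intro Max.boundedI) (auto simp: finite_M)

lemma B_mu_eq_Bset:
  "B \<mu> = Bset bar d1 d2 (fst (fst (snd \<mu>))) (snd (fst (snd \<mu>))) (fst (snd (snd \<mu>)))
    (fst (snd (snd (snd \<mu>))))"
  by (simp add: B_mu_def split: prod.split)

lemma growth_prefixes_B_le: "growth (lang_prefixes (B \<mu>)) \<le> growth (B \<mu>)"
proof -
  obtain K where "\<And>u t. u @ t \<in> B \<mu> \<Longrightarrow> \<exists>t'. length t' \<le> K \<and> u @ t' \<in> B \<mu>"
    unfolding B_mu_eq_Bset by (rule Bset_bounded_completions) blast
  then show ?thesis by (rule growth_lang_prefixes_le)
qed

lemma growth_prefixes_wb_B_le: "growth (lang_prefixes (wb ` B \<mu>)) \<le> growth (B \<mu>)"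
proof -
  obtain K where "\<And>u t. u @ t \<in> wb ` B \<mu> \<Longrightarrow> \<exists>t'. length t' \<le> K \<and> u @ t' \<in> wb ` B \<mu>"
    unfolding B_mu_eq_Bset using involution by (rule wbar_Bset_bounded_completions) blast
  then have "growth (lang_prefixes (wb ` B \<mu>)) \<le> growth (wb ` B \<mu>)"
    by (rule growth_lang_prefixes_le)
  then show ?thesis by (simp add: growth_image_eq inj_wb)
qed

lemma growth_UN_conc_le:
  assumes "\<And>\<mu>. \<mu> \<in> M \<Longrightarrow> growth (P \<mu>) \<le> growth (B \<mu>)"
  shows "growth (\<Union>\<mu>\<in>M. conc (R \<mu>) (P \<mu>)) \<le> max \<sigma> \<rho>"
proof (rule growth_UN_le[OF finite_M])
  show "0 \<le> max \<sigma> \<rho>" using sigma_nonneg by simp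
  fix \<mu> assume "\<mu> \<in> M"
  then have "growth (R \<mu>) \<le> \<rho>" "growth (P \<mu>) \<le> \<sigma>"
    using assms[of \<mu>] growth_B_le_sigma[of \<mu>] growth_R_le_rho[of \<mu>] by auto
  then have "max (growth (R \<mu>)) (growth (P \<mu>)) \<le> max \<sigma> \<rho>"
    by (intro max.boundedI) (simp_all add: le_max_iff_disj)
  with growth_conc_le show "growth (conc (R \<mu>) (P \<mu>)) \<le> max \<sigma> \<rho>"
    by (rule order_trans)
qed

lemma growth_L1_le:
  assumes "\<forall>w \<in> L1. \<exists>\<alpha> u v. length \<alpha> = \<kappa> \<and> w = u @ \<alpha> @ v @ wb \<alpha>"
  shows "growth L1 \<le> max \<sigma> \<rho>"
  using growth_le_by_truncation[OF L1_truncation[OF assms]]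
    growth_UN_conc_le[OF growth_prefixes_B_le] by (rule order_trans)

lemma growth_L2_le:
  assumes "\<forall>w \<in> L2. \<exists>\<alpha> u v. length \<alpha> = \<kappa> \<and> w = \<alpha> @ v @ wb \<alpha> @ u"
  shows "growth L2 \<le> max \<sigma> \<rho>"
proof -
  have "growth (wb ` L2) \<le> max \<sigma> \<rho>"
    using growth_le_by_truncation[OF L2_truncation[OF assms]]
      growth_UN_conc_le[OF growth_prefixes_wb_B_le] by (rule order_trans)
  then show ?thesis by (simp add: growth_image_eq inj_wb)
qed

end

theorem lemma12:
  fixes bar :: "'a::finite \<Rightarrow> 'a" and \<kappa> :: nat
    and d1 :: "'q1::finite \<Rightarrow> 'a \<Rightarrow> 'q1" and q01 :: 'q1 and F1 :: "'q1 set"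
    and d2 :: "'q2::finite \<Rightarrow> 'a \<Rightarrow> 'q2" and q02 :: 'q2 and F2 :: "'q2 set"
    and L1 L2 :: "'a list set"
  assumes "card (UNIV :: 'a set) \<ge> 2"
    and "\<forall>a. bar (bar a) = a"
    and "\<kappa> > 0"
    and "L1 = dfa_lang d1 q01 F1"
    and "wbar bar ` L2 = dfa_lang d2 q02 F2"
    and "\<forall>w \<in> L1. \<exists>\<alpha> u v. length \<alpha> = \<kappa> \<and> w = u @ \<alpha> @ v @ wbar bar \<alpha>"
    and "\<forall>w \<in> L2. \<exists>\<alpha> u v. length \<alpha> = \<kappa> \<and> w = \<alpha> @ v @ wbar bar \<alpha> @ u"
  shows "max (growth L1) (growth L2) =
         max (sigma_max bar \<kappa> d1 q01 F1 d2 q02 F2) (rho_max bar \<kappa> d1 q01 F1 d2 q02 F2)"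
proof -
  interpret bridge_automaton bar \<kappa> d1 q01 F1 d2 q02 F2 L1 L2
    using assms(2-5) by unfold_locales auto
  have "max \<sigma> \<rho> \<le> max (growth L1) (growth L2)"
    using sigma_le rho_le by simp
  moreover have "max (growth L1) (growth L2) \<le> max \<sigma> \<rho>"
    using growth_L1_le[OF assms(6)] growth_L2_le[OF assms(7)] by simp
  ultimately show ?thesis by (rule antisym[rotated])
qed

end
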